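(* Let $v^1,\dots,v^k$ be a basis of $\mathfrak h^*$, $G^{ab}=(v^a|v^b)$, and $(G_{ab})$ the inverse matrix of $(G^{ab})$. For a real root $\alpha=\sum_a\alpha_av^a$ define, for $a,b,c,d\in\{1,\dots,k\}$, $$X(\alpha)_{ab\,cd}=\tfrac12\alpha_a\alpha_b\alpha_c\alpha_d-\alpha_{(a}G_{b)(c}\alpha_{d)}+\tfrac14G_{a(c}G_{d)b},$$ where $\alpha_{(a}G_{b)(c}\alpha_{d)}:=\frac14(\alpha_aG_{bc}\alpha_d+\alpha_bG_{ac}\alpha_d+\alpha_aG_{bd}\alpha_c+\alpha_bG_{ad}\alpha_c)$ and $G_{a(c}G_{d)b}:=\frac12(G_{ac}G_{db}+G_{ad}G_{cb})$. Then for all real roots $\alpha,\beta$ with $(\alpha|\beta)=0$, $$\sum_{e,f,g,h=1}^k\big(X(\alpha)_{ab\,ef}G^{eg}G^{fh}X(\beta)_{gh\,cd}-X(\beta)_{ab\,ef}G^{eg}G^{fh}X(\alpha)_{gh\,cd}\big)=0$$ for all $a,b,c,d$, and for all real roots $\alpha,\beta$ with $(\alpha|\beta)=\mp1$, $$\sum_{e,f,g,h=1}^k\big(X(\alpha)_{ab\,ef}G^{eg}G^{fh}X(\beta)_{gh\,cd}+X(\beta)_{ab\,ef}G^{eg}G^{fh}X(\alpha)_{gh\,cd}\big)=\tfrac12X(\alpha\pm\beta)_{ab\,cd}.$$ In particular, with the Clifford algebra $\mathcal S$ and elements $\phi^{ab}_\gamma$ defined below and $\widehat J(\alpha_i):=\sum_{a,b,c,d=1}^k\sum_{\gamma,\delta=1}^lX(\alpha_i)_{ab\,cd}\Gamma(\alpha_i)_{\gamma\delta}\phi^{ab}_\gamma\phi^{cd}_\delta$,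 the assignment $X_i\mapsto\widehat J(\alpha_i)$ extends to a Lie algebra homomorphism $\mathfrak k\to(\mathcal S,[\cdot,\cdot])$, i.e. a finite-dimensional representation of $\mathfrak k$.
   Context: Let $A=(a_{ij})_{1\le i,j\le n}$ be a symmetrizable simply laced generalized Cartan matrix (off-diagonal entries $0$ or $-1$); the Dynkin diagram has an edge between $i\ne j$ iff $a_{ij}=-1$. Let $\mathfrak g$ be the split real Kac–Moody algebra of $A$ with Chevalley generators $e_i,f_i$, Cartan subalgebra $\mathfrak h$ (from a real realization), simple roots $\alpha_1,\dots,\alpha_n\in\mathfrak h^*$, real roots $\Delta^{\mathrm{re}}$, and let $(\cdot|\cdot)$ be the nondegenerate invariant symmetric bilinear form induced on $\mathfrak h^*$, with $(\alpha_i|\alpha_j)=a_{ij}$. Let $\mathfrak k$ be the fixed-point subalgebra of the Chevalley involution ($e_i\mapsto -f_i$, $f_i\mapsto-e_i$, $h\mapsto -h$), with Berman generators $X_i=e_i-f_i$; $\mathfrak k$ is presented by generators $X_1,\dots,X_n$ and relations $[X_i,[X_i,X_j]]=-X_j$ if $a_{ij}=-1$, $[X_i,X_j]=0$ if $a_{ij}=0$. A generalized spin representation is a representation $\rho$ of $\mathfrak k$ with $\rho(X_i)^2=-\frac14\mathrm{id}$. Fix a finite-dimensional real vector space $S$ with positive definite inner product $q_2$ and orthonormal basis $f_1,\dots,f_l$, and a generalized spin representation $\rho:\mathfrak k\to\mathrm{End}(S)$ whose values $\rho(X_i)$ are anti-symmetric real matrices in this basis (such exist, e.g. by realifying the generalized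 spin representations with compact image of Hainke–Köhl–Levy); put $\Gamma(\alpha_i):=2\rho(X_i)$. Let $W=\mathrm{Sym}^2(\mathfrak h^* )$ (symmetric tensors in $\mathfrak h^*\otimes\mathfrak h^*$) with the symmetric bilinear form $q_1$ obtained by restricting $(\cdot|\cdot)\otimes(\cdot|\cdot)$; let $q=q_1\otimes q_2$ on $W\otimes S$, and $\mathcal S$ the Clifford algebra of $W\otimes S$: the tensor algebra modulo the ideal generated by $w\otimes w-\frac12q(w,w)\cdot1$. Put $\phi^{ab}_\gamma:=\frac12(v^a\otimes v^b+v^b\otimes v^a)\otimes f_\gamma\in\mathcal S$. *)

theory Defs
  imports "HOL-Analysis.Analysis"
begin

text \<open>The dual Cartan subalgebra h* is identified with real^'k via the
coordinates with respect to the chosen basis v^1..v^k; thus a vector x has coordinates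
x $ a (the alpha_a of the paper), and the invariant form is given by the Gram matrix
Gup = (G^{ab}) = ((v^a|v^b)).  Simple roots are indexed by the finite type 'n, the
orthonormal basis of S by the finite type 'l.\<close>

definition ip :: "real^'k^'k \<Rightarrow> real^'k \<Rightarrow> real^'k \<Rightarrow> real" where
  "ip Gup x y = (\<Sum>a\<in>UNIV. \<Sum>b\<in>UNIV. x $ a * Gup $ a $ b * y $ b)"

text \<open>Simple reflection s_i(lambda) = lambda - <lambda, alpha_i^vee> alpha_i; in the simply
laced case (alpha_i|alpha_i) = 2, so <lambda, alpha_i^vee> = (lambda|alpha_i).\<close>
definition sref :: "real^'k^'k \<Rightarrow> real^'k \<Rightarrow> real^'k \<Rightarrow> real^'k" where
  "sref Gup ai x = x - ip Gup x ai *\<^sub>R ai"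

inductive real_root :: "real^'k^'k \<Rightarrow> ('n \<Rightarrow> real^'k) \<Rightarrow> real^'k \<Rightarrow> bool"
  for Gup :: "real^'k^'k" and alpha :: "'n \<Rightarrow> real^'k" where
  simple: "real_root Gup alpha (alpha i)"
| refl: "real_root Gup alpha x \<Longrightarrow> real_root Gup alpha (sref Gup (alpha i) x)"

definition Xt :: "real^'k^'k \<Rightarrow> real^'k \<Rightarrow> 'k \<Rightarrow> 'k \<Rightarrow> 'k \<Rightarrow> 'k \<Rightarrow> real" where
  "Xt Gup al a b c d =
     (let Gdn = matrix_inv Gup in
      1/2 * al$a * al$b * al$c * al$d
      - 1/4 * (al$a * Gdn$b$c * al$d + al$b * Gdn$a$c * al$d
               + al$a * Gdn$b$d * al$c + al$b * Gdn$a$d * al$c)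
      + 1/4 * (1/2 * (Gdn$a$c * Gdn$d$b + Gdn$a$d * Gdn$c$b)))"

definition contr :: "real^'k^'k \<Rightarrow> ('k \<Rightarrow> 'k \<Rightarrow> 'k \<Rightarrow> 'k \<Rightarrow> real)
     \<Rightarrow> ('k \<Rightarrow> 'k \<Rightarrow> 'k \<Rightarrow> 'k \<Rightarrow> real) \<Rightarrow> 'k \<Rightarrow> 'k \<Rightarrow> 'k \<Rightarrow> 'k \<Rightarrow> real" where
  "contr Gup X Y a b c d =
     (\<Sum>e\<in>UNIV. \<Sum>f\<in>UNIV. \<Sum>g\<in>UNIV. \<Sum>h\<in>UNIV.
        X a b e f * Gup$e$g * Gup$f$h * Y g h c d)"

text \<open>q = q1 (x) q2 evaluated on the spanning elements phi^{ab}_gamma of W (x) S: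
q1(sym(v^a v^b), sym(v^c v^d)) = 1/2 (G^{ac} G^{bd} + G^{ad} G^{bc}), q2(f_g, f_d) = delta.\<close>
definition qgen :: "real^'k^'k \<Rightarrow> 'k \<Rightarrow> 'k \<Rightarrow> 'l \<Rightarrow> 'k \<Rightarrow> 'k \<Rightarrow> 'l \<Rightarrow> real" where
  "qgen Gup a b g c d h =
     (if g = h then 1/2 * (Gup$a$c * Gup$b$d + Gup$a$d * Gup$b$c) else 0)"

definition comm :: "'A::ring \<Rightarrow> 'A \<Rightarrow> 'A" where
  "comm x y = x * y - y * x"

text \<open>Jhat(alpha_i) in an algebra receiving the Clifford generators phi^{ab}_gamma,
with Gamma(alpha_i) = 2 rho(X_i).\<close>
definition Jhat :: "real^'k^'k \<Rightarrow> real^'k \<Rightarrow> real^'l^'l \<Rightarrow> ('k \<Rightarrow> 'k \<Rightarrow> 'l \<Rightarrow> 'A::real_algebra_1) \<Rightarrow> 'A" where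
  "Jhat Gup al rhoi phi =
     (\<Sum>a\<in>UNIV. \<Sum>b\<in>UNIV. \<Sum>c\<in>UNIV. \<Sum>d\<in>UNIV. \<Sum>g\<in>UNIV. \<Sum>h\<in>UNIV.
        (Xt Gup al a b c d * (2 * rhoi$g$h)) *\<^sub>R (phi a b g * phi c d h))"

end

theory Submission
  imports Defs
begin

(*
  X(alpha) is a linear combination of Kronecker products of the rank-one tensor alpha_a alpha_b
  and of the dual Gram matrix G_ab.  A contraction of two such products factorises into
  contractions of 2-tensors, which are evaluated by (alpha|beta) and by G^ab G_bc = delta_a^c;
  as real roots satisfy (alpha|alpha) = 2, the (anti)commutator identities for X(alpha), X(beta)
  become identities between polynomials in (alpha|beta).

  Jhat(alpha_i) is the quadratic Clifford element whose coefficient matrix X(alpha_i) (x)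
  Gamma(alpha_i) on the generators phi^ab_gamma is antisymmetric.  The commutator of quadratic
  elements with coefficients M, N is quadratic with coefficient 2 (M q N - N q M), and for
  coefficients X (x) Gamma this is the contraction of the X's tensored with the product of the
  Gamma's.  Since Gamma(alpha_i)^2 = -1, the relations of rho turn the Berman relations for Jhat
  into the tensor identities: for a_ij = 0 the contractions commute, and for a_ij = -1 the double
  commutator is computed by applying the anticommutator identity to (alpha_i, alpha_j) and then
  to (alpha_i, alpha_i + alpha_j).
*)

section \<open>Finite sums and matrices\<close>

lemma sum_rotate3:
  "(\<Sum>a\<in>A. \<Sum>b\<in>B. \<Sum>c\<in>C. f a b c) = (\<Sum>c\<in>C. \<Sum>a\<in>A. \<Sum>b\<in>B. f a b c)"
  by (subst sum.swap) (intro sum.cong[OF HOL.refl] sum.swap)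

lemma sum_swap_pairs:
  "(\<Sum>r\<in>A. \<Sum>s\<in>B. \<Sum>p\<in>C. \<Sum>q\<in>D. F r s p q) = (\<Sum>p\<in>C. \<Sum>q\<in>D. \<Sum>r\<in>A. \<Sum>s\<in>B. F r s p q)"
proof -
  have "(\<Sum>r\<in>A. \<Sum>s\<in>B. \<Sum>p\<in>C. \<Sum>q\<in>D. F r s p q) = (\<Sum>r\<in>A. \<Sum>p\<in>C. \<Sum>s\<in>B. \<Sum>q\<in>D. F r s p q)"
    by (rule sum.cong[OF HOL.refl], rule sum.swap)
  also have "\<dots> = (\<Sum>p\<in>C. \<Sum>r\<in>A. \<Sum>q\<in>D. \<Sum>s\<in>B. F r s p q)"
    by (subst sum.swap) (intro sum.cong[OF HOL.refl] sum.swap)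
  also have "\<dots> = (\<Sum>p\<in>C. \<Sum>q\<in>D. \<Sum>r\<in>A. \<Sum>s\<in>B. F r s p q)"
    by (rule sum.cong[OF HOL.refl], rule sum.swap)
  finally show ?thesis .
qed

lemma sum_UNIV_triple:
  "(\<Sum>I\<in>(UNIV::('a::finite \<times> 'b::finite \<times> 'c::finite) set). f I)
   = (\<Sum>a\<in>UNIV. \<Sum>b\<in>UNIV. \<Sum>c\<in>UNIV. f (a, b, c))"
  by (simp add: sum.cartesian_product split_def flip: UNIV_Times_UNIV)

lemma sum4_product:
  fixes A B C D :: "'k \<Rightarrow> real" and G :: "'k \<Rightarrow> 'k \<Rightarrow> real"
  shows "(\<Sum>e\<in>UNIV. \<Sum>f\<in>UNIV. \<Sum>g\<in>UNIV. \<Sum>h\<in>UNIV. (A e * B f) * G e g * G f h * (C g * D h))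
       = (\<Sum>e\<in>UNIV. \<Sum>g\<in>UNIV. A e * G e g * C g) * (\<Sum>f\<in>UNIV. \<Sum>h\<in>UNIV. B f * G f h * D h)"
proof -
  have "(\<Sum>e\<in>UNIV. \<Sum>g\<in>UNIV. A e * G e g * C g) * (\<Sum>f\<in>UNIV. \<Sum>h\<in>UNIV. B f * G f h * D h)
     = (\<Sum>e\<in>UNIV. \<Sum>g\<in>UNIV. \<Sum>f\<in>UNIV. \<Sum>h\<in>UNIV. (A e * G e g * C g) * (B f * G f h * D h))"
    unfolding sum_distrib_right by (simp add: sum_distrib_left)
  also have "\<dots> = (\<Sum>e\<in>UNIV. \<Sum>f\<in>UNIV. \<Sum>g\<in>UNIV. \<Sum>h\<in>UNIV. (A e * G e g * C g) * (B f * G f h * D h))"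
    by (rule sum.cong[OF HOL.refl], rule sum.swap)
  finally show ?thesis by (simp add: mult_ac)
qed

lemma sym_matrix_entry:
  fixes G :: "'a^'n^'n"
  assumes "transpose G = G"
  shows "G $ b $ a = G $ a $ b"
  using arg_cong[OF assms, of "\<lambda>P. P $ a $ b"] by (simp add: transpose_def)

lemma antisym_matrix_entry:
  fixes R :: "'a::ab_group_add^'n^'n"
  assumes "transpose R = - R"
  shows "R $ b $ a = - R $ a $ b"
  using arg_cong[OF assms, of "\<lambda>P. P $ a $ b"] by (simp add: transpose_def)

lemma matrix_inv_right:
  fixes G :: "'a::semiring_1^'n^'m"
  assumes "invertible G"
  shows "G ** matrix_inv G = mat 1"
  using someI_ex[of "\<lambda>G'. G ** G' = mat 1 \<and> G' ** G = mat 1"] assms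
  unfolding invertible_def matrix_inv_def by blast

lemma matrix_inv_left:
  fixes G :: "'a::semiring_1^'n^'m"
  assumes "invertible G"
  shows "matrix_inv G ** G = mat 1"
  using someI_ex[of "\<lambda>G'. G ** G' = mat 1 \<and> G' ** G = mat 1"] assms
  unfolding invertible_def matrix_inv_def by blast

lemma transpose_matrix_inv_sym:
  fixes G :: "'a::comm_semiring_1^'n^'n"
  assumes "invertible G" and "transpose G = G"
  shows "transpose (matrix_inv G) = matrix_inv G"
proof -
  have "transpose (matrix_inv G) ** G = mat 1"
    by (metis assms matrix_inv_right matrix_transpose_mul transpose_mat)
  then show ?thesis
    by (metis assms(1) matrix_inv_right matrix_mul_assoc matrix_mul_lid matrix_mul_rid)
qed

lemma matrix_inv_sym_entry:
  fixes G :: "'a::comm_semiring_1^'n^'n"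
  assumes "invertible G" and "transpose G = G"
  shows "matrix_inv G $ a $ b = matrix_inv G $ b $ a"
  by (rule sym_matrix_entry[OF transpose_matrix_inv_sym[OF assms]])

lemma sum_matrix_inv_right:
  fixes G :: "'a::semiring_1^'n^'n"
  assumes "invertible G"
  shows "(\<Sum>g\<in>UNIV. G $ e $ g * matrix_inv G $ g $ c) = of_bool (e = c)"
  using arg_cong[OF matrix_inv_right[OF assms], of "\<lambda>P. P $ e $ c"]
  by (simp add: matrix_matrix_mult_def mat_def)

lemma sum_matrix_inv_left:
  fixes G :: "'a::semiring_1^'n^'n"
  assumes "invertible G"
  shows "(\<Sum>g\<in>UNIV. matrix_inv G $ e $ g * G $ g $ c) = of_bool (e = c)"
  using arg_cong[OF matrix_inv_left[OF assms], of "\<lambda>P. P $ e $ c"]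
  by (simp add: matrix_matrix_mult_def mat_def)

lemma matrix_diff_ldistrib: "(A::'a::ring_1^'n^'m) ** (B - C) = A ** B - A ** C"
  by (simp add: matrix_matrix_mult_def vec_eq_iff algebra_simps sum_subtractf)

lemma matrix_diff_rdistrib: "((A::'a::ring_1^'n^'m) - B) ** C = A ** C - B ** C"
  by (simp add: matrix_matrix_mult_def vec_eq_iff algebra_simps sum_subtractf)

lemma matrix_mul_scaleR: "((c::real) *\<^sub>R (A::real^'n^'m)) ** (d *\<^sub>R B) = (c * d) *\<^sub>R (A ** B)"
  by (simp add: matrix_matrix_mult_def vec_eq_iff algebra_simps sum_distrib_left)

lemma matrix_mul_scalar_square:
  fixes R R' :: "real^'l^'l"
  assumes "R ** R = c *\<^sub>R mat 1"
  shows "R ** R ** R' = c *\<^sub>R R'" and "R' ** R ** R = c *\<^sub>R R'"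
  by (simp_all only: assms scalar_matrix_assoc[symmetric] matrix_mul_lid matrix_mul_assoc[symmetric]
      matrix_scalar_ac matrix_mul_rid)

lemma serre_matrix_middle:
  fixes R R' :: "real^'l^'l"
  assumes R_sq: "R ** R = c *\<^sub>R mat 1"
    and serre: "R ** (R ** R' - R' ** R) - (R ** R' - R' ** R) ** R = - R'"
  shows "R ** R' ** R = (c + 1/2) *\<^sub>R R'"
proof -
  have entry: "(c *\<^sub>R R' - R ** R' ** R - (R ** R' ** R - c *\<^sub>R R')) $ i $ j = (- R') $ i $ j" for i j
    using serre by (simp only: matrix_diff_ldistrib matrix_diff_rdistrib matrix_mul_assoc
        matrix_mul_scalar_square[OF R_sq])
  have "(R ** R' ** R) $ i $ j = ((c + 1/2) *\<^sub>R R') $ i $ j" for i j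
    using entry[of i j] by (simp add: algebra_simps)
  then show ?thesis
    by (simp add: vec_eq_iff)
qed

lemma doubled_serre_products:
  fixes R R' :: "real^'l^'l"
  assumes R_sq: "R ** R = - (1/4) *\<^sub>R mat 1"
    and serre: "R ** (R ** R' - R' ** R) - (R ** R' - R' ** R) ** R = - R'"
  defines "\<Gamma> \<equiv> 2 *\<^sub>R R" and "\<Gamma>' \<equiv> 2 *\<^sub>R R'"
  shows "\<Gamma> ** (\<Gamma> ** \<Gamma>') = - \<Gamma>'" and "\<Gamma> ** (\<Gamma>' ** \<Gamma>) = \<Gamma>'"
    and "(\<Gamma> ** \<Gamma>') ** \<Gamma> = \<Gamma>'" and "(\<Gamma>' ** \<Gamma>) ** \<Gamma> = - \<Gamma>'"
proof -
  have R_sq': "R ** R = (- (1/4)) *\<^sub>R mat 1"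
    using R_sq by simp
  show "\<Gamma> ** (\<Gamma> ** \<Gamma>') = - \<Gamma>'" "\<Gamma> ** (\<Gamma>' ** \<Gamma>) = \<Gamma>'"
      "(\<Gamma> ** \<Gamma>') ** \<Gamma> = \<Gamma>'" "(\<Gamma>' ** \<Gamma>) ** \<Gamma> = - \<Gamma>'"
    using serre_matrix_middle[OF R_sq' serre] matrix_mul_scalar_square[OF R_sq']
    by (simp_all add: \<Gamma>_def \<Gamma>'_def matrix_mul_scaleR matrix_mul_assoc)
qed

section \<open>The invariant form and real roots\<close>

lemma ip_sym:
  assumes "transpose G = G"
  shows "ip G x y = ip G y x"
  using sym_matrix_entry[OF assms] unfolding ip_def by (subst sum.swap) (simp add: mult_ac)

lemma ip_add_left: "ip G (x + y) z = ip G x z + ip G y z"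
  unfolding ip_def by (simp add: algebra_simps sum.distrib)

lemma ip_add_right: "ip G z (x + y) = ip G z x + ip G z y"
  unfolding ip_def by (simp add: algebra_simps sum.distrib)

lemma ip_diff_left: "ip G (x - y) z = ip G x z - ip G y z"
  unfolding ip_def by (simp add: algebra_simps sum_subtractf)

lemma ip_diff_right: "ip G z (x - y) = ip G z x - ip G z y"
  unfolding ip_def by (simp add: algebra_simps sum_subtractf)

lemma ip_scaleR_left: "ip G (r *\<^sub>R x) z = r * ip G x z"
  unfolding ip_def by (simp add: algebra_simps sum_distrib_left)

lemma ip_scaleR_right: "ip G z (r *\<^sub>R x) = r * ip G z x"
  unfolding ip_def by (simp add: algebra_simps sum_distrib_left)

lemma ip_minus_left: "ip G (- x) z = - ip G x z"
  unfolding ip_def by (simp add: sum_negf)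

lemma ip_minus_right: "ip G z (- x) = - ip G z x"
  unfolding ip_def by (simp add: sum_negf)

lemma real_root_ip_self:
  assumes "real_root G alpha x"
    and "transpose G = G" and "\<And>i. ip G (alpha i) (alpha i) = 2"
  shows "ip G x x = 2"
  using assms(1)
proof induction
  case (simple i)
  then show ?case using assms(3) by simp
next
  case (refl x i)
  have "ip G (alpha i) x = ip G x (alpha i)"
    using ip_sym[OF assms(2)] by metis
  then show ?case
    unfolding sref_def
    by (simp add: ip_diff_left ip_diff_right ip_scaleR_left ip_scaleR_right refl.IH assms(3)
        algebra_simps)
qed

section \<open>Contractions of the tensors X(alpha)\<close>

definition contr2 :: "real^'k^'k \<Rightarrow> ('k \<Rightarrow> 'k \<Rightarrow> real) \<Rightarrow> ('k \<Rightarrow> 'k \<Rightarrow> real) \<Rightarrow> 'k \<Rightarrow> 'k \<Rightarrow> real"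
  where "contr2 G P Q a c = (\<Sum>e\<in>UNIV. \<Sum>g\<in>UNIV. P a e * G $ e $ g * Q g c)"

definition tprod :: "('k \<Rightarrow> 'k \<Rightarrow> real) \<Rightarrow> ('k \<Rightarrow> 'k \<Rightarrow> real) \<Rightarrow> 'k \<Rightarrow> 'k \<Rightarrow> 'k \<Rightarrow> 'k \<Rightarrow> real"
  where "tprod P Q a b c d = P a c * Q b d"

definition tprod_flip :: "('k \<Rightarrow> 'k \<Rightarrow> real) \<Rightarrow> ('k \<Rightarrow> 'k \<Rightarrow> real) \<Rightarrow> 'k \<Rightarrow> 'k \<Rightarrow> 'k \<Rightarrow> 'k \<Rightarrow> real"
  where "tprod_flip P Q a b c d = P a d * Q b c"

definition outer :: "real^'k \<Rightarrow> 'k \<Rightarrow> 'k \<Rightarrow> real"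
  where "outer x a b = x $ a * x $ b"

definition gram_inv :: "real^'k^'k \<Rightarrow> 'k \<Rightarrow> 'k \<Rightarrow> real"
  where "gram_inv G a b = matrix_inv G $ a $ b"

lemma contr_tprod_tprod:
  "contr G (tprod P Q) (tprod P' Q') a b c d = contr2 G P P' a c * contr2 G Q Q' b d"
  unfolding contr_def tprod_def contr2_def
  using sum4_product[of "P a" "Q b" "\<lambda>e g. G $ e $ g" "\<lambda>g. P' g c" "\<lambda>h. Q' h d"] by simp

lemma contr_tprod_flip_tprod:
  "contr G (tprod_flip P Q) (tprod P' Q') a b c d = contr2 G Q P' b c * contr2 G P Q' a d"
  unfolding contr_def tprod_def tprod_flip_def contr2_def
  using sum4_product[of "Q b" "P a" "\<lambda>e g. G $ e $ g" "\<lambda>g. P' g c" "\<lambda>h. Q' h d"]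
  by (simp add: mult_ac)

lemma contr_tprod_tprod_flip:
  "contr G (tprod P Q) (tprod_flip P' Q') a b c d = contr2 G P P' a d * contr2 G Q Q' b c"
  unfolding contr_def tprod_def tprod_flip_def contr2_def
  using sum4_product[of "P a" "Q b" "\<lambda>e g. G $ e $ g" "\<lambda>g. P' g d" "\<lambda>h. Q' h c"]
  by (simp add: mult_ac)

lemma contr_tprod_flip_tprod_flip:
  "contr G (tprod_flip P Q) (tprod_flip P' Q') a b c d = contr2 G Q P' b d * contr2 G P Q' a c"
  unfolding contr_def tprod_flip_def contr2_def
  using sum4_product[of "Q b" "P a" "\<lambda>e g. G $ e $ g" "\<lambda>g. P' g d" "\<lambda>h. Q' h c"]
  by (simp add: mult_ac)

lemma contr2_outer_outer: "contr2 G (outer x) (outer y) a c = x $ a * ip G x y * y $ c"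
  unfolding contr2_def outer_def ip_def by (simp add: sum_distrib_left sum_distrib_right mult_ac)

lemma contr2_outer_gram_inv:
  assumes "invertible G"
  shows "contr2 G (outer x) (gram_inv G) a c = x $ a * x $ c"
proof -
  have "contr2 G (outer x) (gram_inv G) a c
      = (\<Sum>e\<in>UNIV. x $ a * x $ e * (\<Sum>g\<in>UNIV. G $ e $ g * matrix_inv G $ g $ c))"
    unfolding contr2_def outer_def gram_inv_def by (simp add: sum_distrib_left mult_ac)
  then show ?thesis by (simp add: sum_matrix_inv_right[OF assms])
qed

lemma contr2_gram_inv_outer:
  assumes "invertible G"
  shows "contr2 G (gram_inv G) (outer y) a c = y $ a * y $ c"
proof -
  have "contr2 G (gram_inv G) (outer y) a c
      = (\<Sum>g\<in>UNIV. (\<Sum>e\<in>UNIV. matrix_inv G $ a $ e * G $ e $ g) * (y $ g * y $ c))"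
    unfolding contr2_def outer_def gram_inv_def by (subst sum.swap) (simp add: sum_distrib_right)
  then show ?thesis by (simp add: sum_matrix_inv_left[OF assms])
qed

lemma contr2_gram_inv_gram_inv:
  assumes "invertible G"
  shows "contr2 G (gram_inv G) (gram_inv G) a c = gram_inv G a c"
proof -
  have "contr2 G (gram_inv G) (gram_inv G) a c
      = (\<Sum>e\<in>UNIV. matrix_inv G $ a $ e * (\<Sum>g\<in>UNIV. G $ e $ g * matrix_inv G $ g $ c))"
    unfolding contr2_def gram_inv_def by (simp add: sum_distrib_left mult_ac)
  then show ?thesis by (simp add: sum_matrix_inv_right[OF assms] gram_inv_def)
qed

lemma Xt_eq_tprod:
  assumes "invertible G" and "transpose G = G"
  shows "Xt G x = (\<lambda>a b c d. 1/2 * tprod (outer x) (outer x) a b c d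
     - 1/4 * (tprod_flip (outer x) (gram_inv G) a b c d + tprod (gram_inv G) (outer x) a b c d
              + tprod (outer x) (gram_inv G) a b c d + tprod_flip (gram_inv G) (outer x) a b c d)
     + 1/8 * (tprod (gram_inv G) (gram_inv G) a b c d + tprod_flip (gram_inv G) (gram_inv G) a b c d))"
  unfolding Xt_def Let_def tprod_def tprod_flip_def outer_def gram_inv_def
  using matrix_inv_sym_entry[OF assms] by (intro ext) (simp add: algebra_simps)

lemma Xt_minus: "Xt G (- x) = Xt G x"
  by (intro ext) (simp add: Xt_def Let_def)

lemma Xt_swap_pairs:
  assumes "invertible G" and "transpose G = G"
  shows "Xt G x c d a b = Xt G x a b c d"
  unfolding Xt_def Let_def using matrix_inv_sym_entry[OF assms] by (simp add: algebra_simps)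

lemma Xt_swap_last:
  assumes "invertible G" and "transpose G = G"
  shows "Xt G x a b d c = Xt G x a b c d"
  unfolding Xt_def Let_def using matrix_inv_sym_entry[OF assms] by (simp add: algebra_simps)

lemma contr_add_left:
  "contr G (\<lambda>a b c d. X a b c d + Y a b c d) Z a b c d = contr G X Z a b c d + contr G Y Z a b c d"
  unfolding contr_def by (simp add: algebra_simps sum.distrib)

lemma contr_diff_left:
  "contr G (\<lambda>a b c d. X a b c d - Y a b c d) Z a b c d = contr G X Z a b c d - contr G Y Z a b c d"
  unfolding contr_def by (simp add: algebra_simps sum_subtractf)

lemma contr_scale_left:
  "contr G (\<lambda>a b c d. r * X a b c d) Z a b c d = r * contr G X Z a b c d"
  unfolding contr_def by (simp add: algebra_simps sum_distrib_left)

lemma contr_add_right: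
  "contr G Z (\<lambda>a b c d. X a b c d + Y a b c d) a b c d = contr G Z X a b c d + contr G Z Y a b c d"
  unfolding contr_def by (simp add: algebra_simps sum.distrib)

lemma contr_diff_right:
  "contr G Z (\<lambda>a b c d. X a b c d - Y a b c d) a b c d = contr G Z X a b c d - contr G Z Y a b c d"
  unfolding contr_def by (simp add: algebra_simps sum_subtractf)

lemma contr_scale_right:
  "contr G Z (\<lambda>a b c d. r * X a b c d) a b c d = r * contr G Z X a b c d"
  unfolding contr_def by (simp add: algebra_simps sum_distrib_left)

lemma contr_swap_last:
  assumes "\<And>g h c d. Y g h d c = Y g h c d"
  shows "contr G X Y a b d c = contr G X Y a b c d"
  unfolding contr_def by (simp add: assms)

lemmas contr_linear =
  contr_add_left contr_diff_left contr_scale_left contr_add_right contr_diff_right contr_scale_right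

lemmas contr_Xt_expand =
  contr_linear contr_tprod_tprod contr_tprod_flip_tprod contr_tprod_tprod_flip
  contr_tprod_flip_tprod_flip contr2_outer_outer

lemma contr_Xt_comm:
  assumes "invertible G" and "transpose G = G"
    and "ip G x x = 2" and "ip G y y = 2" and "ip G x y = 0"
  shows "contr G (Xt G x) (Xt G y) a b c d = contr G (Xt G y) (Xt G x) a b c d"
proof -
  have "ip G y x = 0" using assms ip_sym by metis
  then show ?thesis
    by (simp only: Xt_eq_tprod[OF assms(1,2)] contr_Xt_expand contr2_outer_gram_inv[OF assms(1)]
        contr2_gram_inv_outer[OF assms(1)] contr2_gram_inv_gram_inv[OF assms(1)] assms(3-5))
      (simp add: tprod_def tprod_flip_def outer_def gram_inv_def algebra_simps)
qed

lemma contr_Xt_anticomm_add: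
  assumes "invertible G" and "transpose G = G"
    and "ip G x x = 2" and "ip G y y = 2" and "ip G x y = -1"
  shows "contr G (Xt G x) (Xt G y) a b c d + contr G (Xt G y) (Xt G x) a b c d
       = 1/2 * Xt G (x + y) a b c d"
proof -
  have "ip G y x = -1" using assms ip_sym by metis
  then show ?thesis
    by (simp only: Xt_eq_tprod[OF assms(1,2)] contr_Xt_expand contr2_outer_gram_inv[OF assms(1)]
        contr2_gram_inv_outer[OF assms(1)] contr2_gram_inv_gram_inv[OF assms(1)] assms(3-5))
      (simp add: tprod_def tprod_flip_def outer_def gram_inv_def algebra_simps)
qed

lemma contr_Xt_anticomm_diff:
  assumes "invertible G" and "transpose G = G"
    and "ip G x x = 2" and "ip G y y = 2" and "ip G x y = 1"
  shows "contr G (Xt G x) (Xt G y) a b c d + contr G (Xt G y) (Xt G x) a b c d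
       = 1/2 * Xt G (x - y) a b c d"
  using contr_Xt_anticomm_add[OF assms(1-3), of "- y"] assms(4,5)
  by (simp add: ip_minus_left ip_minus_right Xt_minus)

lemma contr_Xt_double_anticomm:
  assumes "invertible G" and "transpose G = G"
    and "ip G x x = 2" and "ip G y y = 2" and "ip G x y = -1"
  shows "contr G (Xt G x) (contr G (Xt G x) (Xt G y)) a b c d
       + contr G (Xt G x) (contr G (Xt G y) (Xt G x)) a b c d
       + contr G (contr G (Xt G x) (Xt G y)) (Xt G x) a b c d
       + contr G (contr G (Xt G y) (Xt G x)) (Xt G x) a b c d
       = 1/4 * Xt G y a b c d"
proof -
  have "ip G y x = -1" using assms ip_sym by metis
  then have norm_sum: "ip G (x + y) (x + y) = 2" and ip_sum: "ip G x (x + y) = 1"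
    using assms(3-5) by (simp_all add: ip_add_left ip_add_right)
  have anticomm: "(\<lambda>a b c d. contr G (Xt G x) (Xt G y) a b c d + contr G (Xt G y) (Xt G x) a b c d)
      = (\<lambda>a b c d. 1/2 * Xt G (x + y) a b c d)"
    using contr_Xt_anticomm_add[OF assms] by (intro ext)
  have "contr G (Xt G x) (Xt G (x + y)) a b c d + contr G (Xt G (x + y)) (Xt G x) a b c d
      = 1/2 * Xt G y a b c d"
    using contr_Xt_anticomm_diff[OF assms(1-3) norm_sum ip_sum] by (simp add: Xt_minus)
  moreover have "contr G (Xt G x) (contr G (Xt G x) (Xt G y)) a b c d
       + contr G (Xt G x) (contr G (Xt G y) (Xt G x)) a b c d
       = 1/2 * contr G (Xt G x) (Xt G (x + y)) a b c d"
    by (simp only: contr_add_right[symmetric] anticomm contr_scale_right)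
  moreover have "contr G (contr G (Xt G x) (Xt G y)) (Xt G x) a b c d
       + contr G (contr G (Xt G y) (Xt G x)) (Xt G x) a b c d
       = 1/2 * contr G (Xt G (x + y)) (Xt G x) a b c d"
    by (simp only: contr_add_left[symmetric] anticomm contr_scale_left)
  ultimately show ?thesis by simp
qed

section \<open>Quadratic elements of a Clifford algebra\<close>

lemma comm_mult_mult:
  fixes a b c d :: "'a::ring"
  shows "comm (a * b) (c * d) = a * (b * c + c * b) * d - (a * c + c * a) * b * d
                               + c * a * (b * d + d * b) - c * (a * d + d * a) * b"
  by (simp add: comm_def algebra_simps)

lemma comm_mult_mult_clifford:
  fixes \<phi> :: "'i \<Rightarrow> 'a::real_algebra_1"
  assumes "\<And>I J. \<phi> I * \<phi> J + \<phi> J * \<phi> I = q I J *\<^sub>R 1"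
  shows "comm (\<phi> I * \<phi> J) (\<phi> K * \<phi> L) = q J K *\<^sub>R (\<phi> I * \<phi> L) - q I K *\<^sub>R (\<phi> J * \<phi> L)
           + q J L *\<^sub>R (\<phi> K * \<phi> I) - q I L *\<^sub>R (\<phi> K * \<phi> J)"
  by (simp add: comm_mult_mult assms)

definition quad :: "('i::finite \<Rightarrow> 'a::real_algebra_1) \<Rightarrow> ('i \<Rightarrow> 'i \<Rightarrow> real) \<Rightarrow> 'a"
  where "quad \<phi> M = (\<Sum>I\<in>UNIV. \<Sum>J\<in>UNIV. M I J *\<^sub>R (\<phi> I * \<phi> J))"

definition qmul :: "('i::finite \<Rightarrow> 'i \<Rightarrow> real) \<Rightarrow> ('i \<Rightarrow> 'i \<Rightarrow> real) \<Rightarrow> ('i \<Rightarrow> 'i \<Rightarrow> real)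
    \<Rightarrow> 'i \<Rightarrow> 'i \<Rightarrow> real"
  where "qmul q M N I L = (\<Sum>J\<in>UNIV. \<Sum>K\<in>UNIV. M I J * q J K * N K L)"

lemma comm_quad_expand:
  "comm (quad \<phi> M) (quad \<phi> N) = (\<Sum>I\<in>UNIV. \<Sum>J\<in>UNIV. \<Sum>K\<in>UNIV. \<Sum>L\<in>UNIV.
     (M I J * N K L) *\<^sub>R comm (\<phi> I * \<phi> J) (\<phi> K * \<phi> L))"
proof -
  have "quad \<phi> N * quad \<phi> M = (\<Sum>K\<in>UNIV. \<Sum>L\<in>UNIV. \<Sum>I\<in>UNIV. \<Sum>J\<in>UNIV.
      (M I J * N K L) *\<^sub>R (\<phi> K * \<phi> L * (\<phi> I * \<phi> J)))"
    unfolding quad_def sum_distrib_right by (simp add: sum_distrib_left mult_ac)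
  also have "\<dots> = (\<Sum>I\<in>UNIV. \<Sum>J\<in>UNIV. \<Sum>K\<in>UNIV. \<Sum>L\<in>UNIV.
      (M I J * N K L) *\<^sub>R (\<phi> K * \<phi> L * (\<phi> I * \<phi> J)))"
    by (rule sum_swap_pairs)
  finally have "quad \<phi> N * quad \<phi> M = \<dots>" .
  moreover have "quad \<phi> M * quad \<phi> N = (\<Sum>I\<in>UNIV. \<Sum>J\<in>UNIV. \<Sum>K\<in>UNIV. \<Sum>L\<in>UNIV.
      (M I J * N K L) *\<^sub>R (\<phi> I * \<phi> J * (\<phi> K * \<phi> L)))"
    unfolding quad_def sum_distrib_right by (simp add: sum_distrib_left mult_ac)
  ultimately show ?thesis
    by (simp add: comm_def sum_subtractf[symmetric] scaleR_diff_right)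
qed

lemma sum4_eq_quad_qmul:
  "(\<Sum>I\<in>UNIV. \<Sum>J\<in>UNIV. \<Sum>K\<in>UNIV. \<Sum>L\<in>UNIV. (M I J * N K L * q J K) *\<^sub>R (\<phi> I * \<phi> L))
   = quad \<phi> (qmul q M N)"
proof -
  have "(\<Sum>I\<in>UNIV. \<Sum>J\<in>UNIV. \<Sum>K\<in>UNIV. \<Sum>L\<in>UNIV. (M I J * N K L * q J K) *\<^sub>R (\<phi> I * \<phi> L))
      = (\<Sum>I\<in>UNIV. \<Sum>L\<in>UNIV. \<Sum>J\<in>UNIV. \<Sum>K\<in>UNIV. (M I J * N K L * q J K) *\<^sub>R (\<phi> I * \<phi> L))"
    by (rule sum.cong[OF HOL.refl], rule sum_rotate3)
  then show ?thesis
    unfolding quad_def qmul_def scaleR_sum_left by (simp add: mult_ac)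
qed

lemma comm_quad:
  fixes \<phi> :: "'i::finite \<Rightarrow> 'a::real_algebra_1"
  assumes clifford: "\<And>I J. \<phi> I * \<phi> J + \<phi> J * \<phi> I = q I J *\<^sub>R 1"
    and q_sym: "\<And>I J. q I J = q J I"
    and M_antisym: "\<And>I J. M J I = - M I J"
  shows "comm (quad \<phi> M) (quad \<phi> N) = quad \<phi> (\<lambda>I L. 2 * qmul q M N I L - 2 * qmul q N M I L)"
proof -
  have Mt: "(\<lambda>I J. M J I) = (\<lambda>I J. - M I J)"
    by (intro ext) (rule M_antisym)
  have qmul_Mt_left: "qmul q (\<lambda>I J. M J I) N = (\<lambda>I L. - qmul q M N I L)"
    and qmul_Mt_right: "qmul q N (\<lambda>I J. M J I) = (\<lambda>I L. - qmul q N M I L)"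
    unfolding Mt qmul_def by (simp_all add: sum_negf)
  have quad_minus: "quad \<phi> (\<lambda>I L. - P I L) = - quad \<phi> P" for P
    unfolding quad_def by (simp add: sum_negf)
  have qJK_terms: "(\<Sum>I\<in>UNIV. \<Sum>J\<in>UNIV. \<Sum>K\<in>UNIV. \<Sum>L\<in>UNIV. (M I J * N K L * q J K) *\<^sub>R (\<phi> I * \<phi> L))
      = quad \<phi> (qmul q M N)"
    by (rule sum4_eq_quad_qmul)
  \<comment> \<open>By antisymmetry of M, the q_IK and q_JL terms are the q_JK and q_IL terms again.\<close>
  have qIK_terms: "(\<Sum>I\<in>UNIV. \<Sum>J\<in>UNIV. \<Sum>K\<in>UNIV. \<Sum>L\<in>UNIV. (M I J * N K L * q I K) *\<^sub>R (\<phi> J * \<phi> L))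
      = - quad \<phi> (qmul q M N)"
    using sum4_eq_quad_qmul[of "\<lambda>I J. M J I" N q \<phi>]
    by (subst sum.swap) (simp add: qmul_Mt_left quad_minus)
  have qJL_reindex: "(\<Sum>I\<in>UNIV. \<Sum>J\<in>UNIV. \<Sum>K\<in>UNIV. \<Sum>L\<in>UNIV. (M I J * N K L * q J L) *\<^sub>R (\<phi> K * \<phi> I))
      = (\<Sum>K\<in>UNIV. \<Sum>L\<in>UNIV. \<Sum>J\<in>UNIV. \<Sum>I\<in>UNIV. (N K L * M I J * q L J) *\<^sub>R (\<phi> K * \<phi> I))"
    by (subst sum_swap_pairs, subst (2) sum.swap) (intro sum.cong HOL.refl, simp add: q_sym mult_ac)
  have qJL_terms: "\<dots> = - quad \<phi> (qmul q N M)"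
    using sum4_eq_quad_qmul[of N "\<lambda>I J. M J I" q \<phi>] by (simp add: qmul_Mt_right quad_minus)
  have qIL_reindex: "(\<Sum>I\<in>UNIV. \<Sum>J\<in>UNIV. \<Sum>K\<in>UNIV. \<Sum>L\<in>UNIV. (M I J * N K L * q I L) *\<^sub>R (\<phi> K * \<phi> J))
      = (\<Sum>K\<in>UNIV. \<Sum>L\<in>UNIV. \<Sum>I\<in>UNIV. \<Sum>J\<in>UNIV. (N K L * M I J * q L I) *\<^sub>R (\<phi> K * \<phi> J))"
    by (subst sum_swap_pairs) (intro sum.cong HOL.refl, simp add: q_sym mult_ac)
  have qIL_terms: "\<dots> = quad \<phi> (qmul q N M)"
    using sum4_eq_quad_qmul[of N M q \<phi>] by simp
  have quad_lin: "quad \<phi> (\<lambda>I L. 2 * P I L - 2 * Q I L) = 2 *\<^sub>R (quad \<phi> P - quad \<phi> Q)" for P Q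
    unfolding quad_def by (simp add: algebra_simps scaleR_sum_right sum_subtractf)
  show ?thesis
    unfolding comm_quad_expand comm_mult_mult_clifford[of \<phi> q, OF clifford] quad_lin
    by (simp add: scaleR_diff_right scaleR_add_right sum.distrib sum_subtractf scaleR_2
        qJK_terms qIK_terms qJL_reindex qJL_terms qIL_reindex qIL_terms)
qed

lemma qmul_diff_left:
  "qmul q (\<lambda>I L. r * A I L - s * B I L) M = (\<lambda>I L. r * qmul q A M I L - s * qmul q B M I L)"
  unfolding qmul_def by (intro ext) (simp add: algebra_simps sum_subtractf sum_distrib_left)

lemma qmul_diff_right:
  "qmul q M (\<lambda>I L. r * A I L - s * B I L) = (\<lambda>I L. r * qmul q M A I L - s * qmul q M B I L)"
  unfolding qmul_def by (intro ext) (simp add: algebra_simps sum_subtractf sum_distrib_left)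

section \<open>The elements Jhat\<close>

definition uncurry3 :: "('a \<Rightarrow> 'b \<Rightarrow> 'c \<Rightarrow> 'd) \<Rightarrow> 'a \<times> 'b \<times> 'c \<Rightarrow> 'd"
  where "uncurry3 f = (\<lambda>(a, b, c). f a b c)"

definition qgen_triple :: "real^'k^'k \<Rightarrow> 'k \<times> 'k \<times> 'l \<Rightarrow> 'k \<times> 'k \<times> 'l \<Rightarrow> real"
  where "qgen_triple G = (\<lambda>(a, b, g) (c, d, h). qgen G a b g c d h)"

definition tensor_coeff :: "('k \<Rightarrow> 'k \<Rightarrow> 'k \<Rightarrow> 'k \<Rightarrow> real) \<Rightarrow> real^'l^'l
    \<Rightarrow> 'k \<times> 'k \<times> 'l \<Rightarrow> 'k \<times> 'k \<times> 'l \<Rightarrow> real"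
  where "tensor_coeff X R = (\<lambda>(a, b, g) (c, d, h). X a b c d * R $ g $ h)"

lemma uncurry3_clifford:
  assumes "\<And>a b g c d h. \<phi> a b g * \<phi> c d h + \<phi> c d h * \<phi> a b g = qgen G a b g c d h *\<^sub>R 1"
  shows "uncurry3 \<phi> I * uncurry3 \<phi> J + uncurry3 \<phi> J * uncurry3 \<phi> I = qgen_triple G I J *\<^sub>R 1"
  using assms by (cases I; cases J) (simp add: uncurry3_def qgen_triple_def)

lemma qgen_triple_sym:
  assumes "transpose G = G"
  shows "qgen_triple G I J = qgen_triple G J I"
  using sym_matrix_entry[OF assms]
  by (cases I; cases J) (auto simp: qgen_triple_def qgen_def mult_ac)

lemma tensor_coeff_antisym:
  assumes "\<And>a b c d. X c d a b = X a b c d" and "transpose R = - R"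
  shows "tensor_coeff X R J I = - tensor_coeff X R I J"
proof -
  obtain a b g c d h where I: "I = (a, b, g)" and J: "J = (c, d, h)"
    by (cases I; cases J) auto
  show ?thesis
    by (simp add: I J tensor_coeff_def assms(1) antisym_matrix_entry[OF assms(2), of g h])
qed

lemma Jhat_eq_quad: "Jhat G x R \<phi> = quad (uncurry3 \<phi>) (tensor_coeff (Xt G x) (2 *\<^sub>R R))"
proof -
  have "Jhat G x R \<phi> = (\<Sum>a\<in>UNIV. \<Sum>b\<in>UNIV. \<Sum>g\<in>UNIV. \<Sum>c\<in>UNIV. \<Sum>d\<in>UNIV. \<Sum>h\<in>UNIV.
        (Xt G x a b c d * (2 * R $ g $ h)) *\<^sub>R (\<phi> a b g * \<phi> c d h))"
    unfolding Jhat_def by (rule sum.cong[OF HOL.refl], rule sum.cong[OF HOL.refl], rule sum_rotate3)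
  then show ?thesis
    by (simp add: quad_def sum_UNIV_triple tensor_coeff_def uncurry3_def)
qed

(* The two summands of q_1 give the same contribution because X is symmetric in c, d. *)
lemma qmul_tensor_coeff:
  fixes X Y :: "'k::finite \<Rightarrow> 'k \<Rightarrow> 'k \<Rightarrow> 'k \<Rightarrow> real" and R R' :: "real^'l::finite^'l"
  assumes X_sym: "\<And>a b c d. X a b d c = X a b c d"
  shows "qmul (qgen_triple G) (tensor_coeff X R) (tensor_coeff Y R')
       = tensor_coeff (contr G X Y) (R ** R')"
proof (intro ext)
  fix I L :: "'k \<times> 'k \<times> 'l"
  obtain a b g a' b' g' where I: "I = (a, b, g)" and L: "L = (a', b', g')"
    by (cases I; cases L) auto
  define T where "T = (\<lambda>\<sigma>. \<Sum>c\<in>UNIV. \<Sum>d\<in>UNIV. \<Sum>h\<in>UNIV. \<Sum>e\<in>UNIV. \<Sum>f\<in>UNIV.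
      X a b c d * R $ g $ h * (G $ c $ \<sigma> e f * G $ d $ \<sigma> f e) * Y e f a' b' * R' $ h $ g')"
  have mult_if: "(z::real) * (if P then w else 0) = (if P then z * w else 0)" for z w P
    by simp
  have "qmul (qgen_triple G) (tensor_coeff X R) (tensor_coeff Y R') I L
      = 1/2 * T (\<lambda>e f. e) + 1/2 * T (\<lambda>e f. f)"
    unfolding I L qmul_def tensor_coeff_def qgen_triple_def sum_UNIV_triple qgen_def T_def
    by (simp add: algebra_simps mult_if sum.distrib sum_distrib_left)
  moreover have "T (\<lambda>e f. f) = T (\<lambda>e f. e)"
    unfolding T_def by (subst sum.swap) (simp add: X_sym[of a b] mult_ac)
  moreover have "T (\<lambda>e f. e) = tensor_coeff (contr G X Y) (R ** R') I L"
  proof -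
    have "tensor_coeff (contr G X Y) (R ** R') I L
        = (\<Sum>c\<in>UNIV. \<Sum>d\<in>UNIV. \<Sum>e\<in>UNIV. \<Sum>f\<in>UNIV. \<Sum>h\<in>UNIV.
            X a b c d * R $ g $ h * (G $ c $ e * G $ d $ f) * Y e f a' b' * R' $ h $ g')"
      unfolding I L tensor_coeff_def contr_def matrix_matrix_mult_def
      by (simp add: sum_distrib_left sum_distrib_right mult_ac)
    also have "\<dots> = T (\<lambda>e f. e)"
      unfolding T_def by (rule sum.cong[OF HOL.refl], rule sum.cong[OF HOL.refl], rule sum_rotate3)
    finally show ?thesis by simp
  qed
  ultimately show "qmul (qgen_triple G) (tensor_coeff X R) (tensor_coeff Y R') I L
      = tensor_coeff (contr G X Y) (R ** R') I L"
    by simp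
qed

lemma comm_quad_tensor_coeff:
  fixes \<phi> :: "'k::finite \<Rightarrow> 'k \<Rightarrow> 'l::finite \<Rightarrow> 'a::real_algebra_1"
  assumes G_sym: "transpose G = G"
    and clifford: "\<And>a b g c d h. \<phi> a b g * \<phi> c d h + \<phi> c d h * \<phi> a b g = qgen G a b g c d h *\<^sub>R 1"
    and X_swap_pairs: "\<And>a b c d. X c d a b = X a b c d"
    and X_swap_last: "\<And>a b c d. X a b d c = X a b c d"
    and Y_swap_last: "\<And>a b c d. Y a b d c = Y a b c d"
    and R_antisym: "transpose R = - R"
  shows "comm (quad (uncurry3 \<phi>) (tensor_coeff X R)) (quad (uncurry3 \<phi>) (tensor_coeff Y R'))
       = quad (uncurry3 \<phi>) (\<lambda>I L. 2 * tensor_coeff (contr G X Y) (R ** R') I L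
                                  - 2 * tensor_coeff (contr G Y X) (R' ** R) I L)"
proof -
  have "tensor_coeff X R J I = - tensor_coeff X R I J" for I J
    by (rule tensor_coeff_antisym[OF X_swap_pairs R_antisym])
  from comm_quad[where \<phi> = "uncurry3 \<phi>" and q = "qgen_triple G",
      OF uncurry3_clifford[OF clifford] qgen_triple_sym[OF G_sym] this]
  show ?thesis
    by (simp add: qmul_tensor_coeff X_swap_last Y_swap_last)
qed

lemma comm_Jhat_eq_0:
  fixes \<phi> :: "'k::finite \<Rightarrow> 'k \<Rightarrow> 'l::finite \<Rightarrow> 'a::real_algebra_1"
  assumes G_inv: "invertible G" and G_sym: "transpose G = G"
    and clifford: "\<And>a b g c d h. \<phi> a b g * \<phi> c d h + \<phi> c d h * \<phi> a b g = qgen G a b g c d h *\<^sub>R 1"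
    and x_norm: "ip G x x = 2" and y_norm: "ip G y y = 2" and xy: "ip G x y = 0"
    and R_antisym: "transpose R = - R" and RR': "R ** R' = R' ** R"
  shows "comm (Jhat G x R \<phi>) (Jhat G y R' \<phi>) = 0"
proof -
  have "comm (Jhat G x R \<phi>) (Jhat G y R' \<phi>) = quad (uncurry3 \<phi>) (\<lambda>I L.
      2 * tensor_coeff (contr G (Xt G x) (Xt G y)) ((2 *\<^sub>R R) ** (2 *\<^sub>R R')) I L
    - 2 * tensor_coeff (contr G (Xt G y) (Xt G x)) ((2 *\<^sub>R R') ** (2 *\<^sub>R R)) I L)"
    unfolding Jhat_eq_quad
    by (rule comm_quad_tensor_coeff[OF G_sym clifford])
      (simp_all add: Xt_swap_pairs[OF G_inv G_sym] Xt_swap_last[OF G_inv G_sym] transpose_scalar R_antisym)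
  also have "\<dots> = quad (uncurry3 \<phi>) (\<lambda>I L. 0)"
    using contr_Xt_comm[OF G_inv G_sym x_norm y_norm xy]
    by (simp add: matrix_mul_scaleR RR' tensor_coeff_def split_def)
  finally show ?thesis
    by (simp add: quad_def)
qed

lemma comm_comm_Jhat_serre:
  fixes \<phi> :: "'k::finite \<Rightarrow> 'k \<Rightarrow> 'l::finite \<Rightarrow> 'a::real_algebra_1"
  assumes G_inv: "invertible G" and G_sym: "transpose G = G"
    and clifford: "\<And>a b g c d h. \<phi> a b g * \<phi> c d h + \<phi> c d h * \<phi> a b g = qgen G a b g c d h *\<^sub>R 1"
    and x_norm: "ip G x x = 2" and y_norm: "ip G y y = 2" and xy: "ip G x y = -1"
    and R_antisym: "transpose R = - R" and R_sq: "R ** R = - (1/4) *\<^sub>R mat 1"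
    and serre: "R ** (R ** R' - R' ** R) - (R ** R' - R' ** R) ** R = - R'"
  shows "comm (Jhat G x R \<phi>) (comm (Jhat G x R \<phi>) (Jhat G y R' \<phi>)) = - Jhat G y R' \<phi>"
proof -
  define X Y where "X = Xt G x" and "Y = Xt G y"
  define \<Gamma> \<Gamma>' where "\<Gamma> = 2 *\<^sub>R R" and "\<Gamma>' = 2 *\<^sub>R R'"
  define M where "M = tensor_coeff X \<Gamma>"
  let ?\<phi> = "uncurry3 \<phi>" and ?q = "qgen_triple G"
  have J: "Jhat G x R \<phi> = quad ?\<phi> M" "Jhat G y R' \<phi> = quad ?\<phi> (tensor_coeff Y \<Gamma>')"
    by (simp_all add: Jhat_eq_quad M_def X_def Y_def \<Gamma>_def \<Gamma>'_def)
  have X_sym: "X a b d c = X a b c d" and Y_sym: "Y a b d c = Y a b c d" for a b c d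
    unfolding X_def Y_def by (simp_all add: Xt_swap_last[OF G_inv G_sym])
  have \<Gamma>_antisym: "transpose \<Gamma> = - \<Gamma>"
    by (simp add: \<Gamma>_def transpose_scalar R_antisym)
  have X_swap_pairs: "X c d a b = X a b c d" for a b c d
    unfolding X_def by (rule Xt_swap_pairs[OF G_inv G_sym])
  have M_antisym: "M J I = - M I J" for I J
    unfolding M_def by (rule tensor_coeff_antisym[OF X_swap_pairs \<Gamma>_antisym])
  have comm_M: "comm (quad ?\<phi> M) (quad ?\<phi> P)
      = quad ?\<phi> (\<lambda>I L. 2 * qmul ?q M P I L - 2 * qmul ?q P M I L)" for P
    by (rule comm_quad[OF uncurry3_clifford[OF clifford] qgen_triple_sym[OF G_sym] M_antisym])
  define C where "C = (\<lambda>I L. 2 * tensor_coeff (contr G X Y) (\<Gamma> ** \<Gamma>') I L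
                             - 2 * tensor_coeff (contr G Y X) (\<Gamma>' ** \<Gamma>) I L)"
  have inner: "comm (Jhat G x R \<phi>) (Jhat G y R' \<phi>) = quad ?\<phi> C"
    unfolding J M_def C_def
    by (rule comm_quad_tensor_coeff[OF G_sym clifford X_swap_pairs X_sym Y_sym \<Gamma>_antisym])
  have "(\<lambda>I L. 2 * qmul ?q M C I L - 2 * qmul ?q C M I L) = (\<lambda>I L. - tensor_coeff Y \<Gamma>' I L)"
  proof (intro ext)
    fix I L :: "'k \<times> 'k \<times> 'l"
    obtain a b g a' b' g' where I: "I = (a, b, g)" and L: "L = (a', b', g')"
      by (cases I; cases L) auto
    have "2 * qmul ?q M C I L - 2 * qmul ?q C M I L
        = - 4 * (contr G X (contr G X Y) a b a' b' + contr G X (contr G Y X) a b a' b'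
               + contr G (contr G X Y) X a b a' b' + contr G (contr G Y X) X a b a' b') * \<Gamma>' $ g $ g'"
      unfolding C_def M_def qmul_diff_left qmul_diff_right qmul_tensor_coeff[OF X_sym]
        qmul_tensor_coeff[OF contr_swap_last[OF Y_sym]] qmul_tensor_coeff[OF contr_swap_last[OF X_sym]]
      by (simp add: doubled_serre_products[OF R_sq serre, folded \<Gamma>_def \<Gamma>'_def] I L tensor_coeff_def
          algebra_simps)
    also have "\<dots> = - tensor_coeff Y \<Gamma>' I L"
      unfolding X_def Y_def contr_Xt_double_anticomm[OF G_inv G_sym x_norm y_norm xy]
      by (simp add: I L tensor_coeff_def)
    finally show "2 * qmul ?q M C I L - 2 * qmul ?q C M I L = - tensor_coeff Y \<Gamma>' I L" .
  qed
  then show ?thesis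
    unfolding inner unfolding J comm_M by (simp add: quad_def sum_negf)
qed

theorem proposition6p3:
  fixes A :: "real^'n^'n"
    and Gup :: "real^'k^'k"
    and alpha :: "'n \<Rightarrow> real^'k"
    and rho :: "'n \<Rightarrow> real^'l^'l"
  assumes A_diag: "\<And>i. A$i$i = 2"
    and A_off: "\<And>i j. i \<noteq> j \<Longrightarrow> A$i$j = 0 \<or> A$i$j = -1"
    and A_gcm: "\<And>i j. A$i$j = 0 \<longleftrightarrow> A$j$i = 0"
    and dim_h: "CARD('k) = 2 * CARD('n) - rank A"
    and G_sym: "transpose Gup = Gup"
    and G_nondeg: "invertible Gup"
    and alpha_indep: "vec.independent (range alpha)" and alpha_inj: "inj alpha"
    and alpha_form: "\<And>i j. ip Gup (alpha i) (alpha j) = A$i$j"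
    and rho_antisym: "\<And>i. transpose (rho i) = - rho i"
    and rho_sq: "\<And>i. rho i ** rho i = - (1/4) *\<^sub>R mat 1"
    and rho_rel1: "\<And>i j. A$i$j = -1 \<Longrightarrow>
                     rho i ** (rho i ** rho j - rho j ** rho i)
                     - (rho i ** rho j - rho j ** rho i) ** rho i = - rho j"
    and rho_rel0: "\<And>i j. A$i$j = 0 \<Longrightarrow> rho i ** rho j - rho j ** rho i = 0"
  shows
    "(\<forall>al be. real_root Gup alpha al \<and> real_root Gup alpha be \<and> ip Gup al be = 0 \<longrightarrow>
        (\<forall>a b c d. contr Gup (Xt Gup al) (Xt Gup be) a b c d
                   - contr Gup (Xt Gup be) (Xt Gup al) a b c d = 0))
   \<and> (\<forall>al be. real_root Gup alpha al \<and> real_root Gup alpha be \<and> ip Gup al be = -1 \<longrightarrow>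
        (\<forall>a b c d. contr Gup (Xt Gup al) (Xt Gup be) a b c d
                   + contr Gup (Xt Gup be) (Xt Gup al) a b c d
                   = 1/2 * Xt Gup (al + be) a b c d))
   \<and> (\<forall>al be. real_root Gup alpha al \<and> real_root Gup alpha be \<and> ip Gup al be = 1 \<longrightarrow>
        (\<forall>a b c d. contr Gup (Xt Gup al) (Xt Gup be) a b c d
                   + contr Gup (Xt Gup be) (Xt Gup al) a b c d
                   = 1/2 * Xt Gup (al - be) a b c d))
   \<and> (\<forall>phi :: 'k \<Rightarrow> 'k \<Rightarrow> 'l \<Rightarrow> 'A::real_algebra_1.
        (\<forall>a b g. phi a b g = phi b a g) \<and>
        (\<forall>a b g c d h. phi a b g * phi c d h + phi c d h * phi a b g
                        = qgen Gup a b g c d h *\<^sub>R 1) \<longrightarrow>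
        (\<forall>i j. A$i$j = -1 \<longrightarrow>
            comm (Jhat Gup (alpha i) (rho i) phi)
                 (comm (Jhat Gup (alpha i) (rho i) phi) (Jhat Gup (alpha j) (rho j) phi))
            = - Jhat Gup (alpha j) (rho j) phi) \<and>
        (\<forall>i j. A$i$j = 0 \<longrightarrow>
            comm (Jhat Gup (alpha i) (rho i) phi) (Jhat Gup (alpha j) (rho j) phi) = 0))"
proof -
  have root_norm: "ip Gup x x = 2" if "real_root Gup alpha x" for x
    using real_root_ip_self[OF that G_sym] by (simp add: alpha_form A_diag)
  have rho_commute: "rho i ** rho j = rho j ** rho i" if "A$i$j = 0" for i j
    using rho_rel0[OF that] by simp
  show ?thesis
    apply (intro conjI allI impI; elim conjE)
    subgoal by (simp only: right_minus_eq) (intro contr_Xt_comm[OF G_nondeg G_sym] root_norm)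
    subgoal by (simp add: contr_Xt_anticomm_add[OF G_nondeg G_sym root_norm root_norm])
    subgoal by (simp add: contr_Xt_anticomm_diff[OF G_nondeg G_sym root_norm root_norm])
    subgoal by (intro comm_comm_Jhat_serre[OF G_nondeg G_sym])
        (simp_all add: alpha_form A_diag rho_antisym rho_sq rho_rel1)
    subgoal by (intro comm_Jhat_eq_0[OF G_nondeg G_sym _ _ _ _ rho_antisym rho_commute])
        (simp_all add: alpha_form A_diag)
    done
qed

end
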